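(* Consider the $(\Xi,\gamma_N,Q_N)$-Wright–Fisher graph described in the context, with type-0 frequency process $(X^N_g)_{g\in\mathbb{N}}$. For every generation $g\ge1$, every $n\le N$ and every $x$, the probability that all individuals of a sample of $n$ distinct individuals from generation $g$ are of type $0$, given $X^N_{g-1}=x$, equals $$S(x,n)=(1-\gamma_N)\,\varphi_{Q_N}(x)^n+\gamma_N\,\nu_N(x,n),\qquad \nu_N(x,n):=\mathbb{E}\Big[\big(\varphi_{Q_N}(Y(x))\big)^n\Big],$$ where $\varphi_{Q_N}$ is the probability generating function of $Q_N$ and $Y(x)=\sum_{i\ge1}B_iZ_i+x(1-|Z|)$, with $Z=(Z_1,Z_2,\dots)$ distributed according to $\Xi$ and $(B_i)_{i\ge1}$ i.i.d. Bernoulli$(x)$ independent of $Z$.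
   Context: Let $\nabla_\infty:=\{z=(z_1,z_2,\dots):z_1\ge z_2\ge\dots\ge0,\ \sum_iz_i\le1\}$ and $|z|:=\sum_iz_i$. Fix $N\in\mathbb{N}$, $\gamma_N\in[0,1]$, a probability distribution $Q_N$ on $\mathbb{N}\cup\{\infty\}$ with generating function $\varphi_{Q_N}(x)=\sum_kx^kQ_N(\{k\})$, and a probability measure $\Xi$ on $\nabla_\infty$. The $(\Xi,\gamma_N,Q_N)$-Wright–Fisher graph: generations $g\in\mathbb{Z}$ each consist of $N$ individuals labelled $1,\dots,N$, $v=(g,i)$. Let $(H_g)_{g\in\mathbb{Z}}$ be i.i.d. Bernoulli$(\gamma_N)$, $(Z_g)_{g\in\mathbb{Z}}$ i.i.d. with law $\Xi$, $Z_g=(Z_{(g,1)},Z_{(g,2)},\dots)$, and $(Y^*_{(g,m)})_{g\in\mathbb{Z},m\in\mathbb{N}}$ i.i.d. uniform on $\{1,\dots,N\}$, all independent. With $U_N$ the uniform distribution on $\{1,\dots,N\}$ set $\eta_g:=\sum_{m\ge1}Z_{(g,m)}\delta_{Y^*_{(g,m)}}+(1-|Z_g|)U_N$ and $\eta^*_g:=H_g\eta_g+(1-H_g)U_N$. Each individual $v$ of generation $g$ independently draws $K_v$ with law $Q_N$ (i.i.d., independent of $H,Z,Y^*$), and then $K_v$ labels $L_{(v,1)},\dots,L_{(v,K_v)}$ which, given $(H,Z,Y^* )$, are i.i.d. with law $\eta^*_g$, independently across individuals; the individuals $(g-1,L_{(v,j)})$ are the potential parents of $v$. Types in $\{0,1\}$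 are assigned arbitrarily at generation $0$; for $g\ge1$ an individual has type $0$ iff all its potential parents have type $0$. $X^N_g$ is the fraction of type-$0$ individuals in generation $g$. *)

theory Defs
  imports "HOL-Probability.Probability"
begin

text \<open>Ordered simplex nabla_infinity.  Sequences are indexed from 0:
  z 0 corresponds to Z_1, z 1 to Z_2, etc.\<close>
definition nabla_inf :: "(nat \<Rightarrow> real) set" where
  "nabla_inf = {z. (\<forall>i. 0 \<le> z i) \<and> (\<forall>i. z (Suc i) \<le> z i) \<and> summable z \<and> suminf z \<le> 1}"

definition znorm :: "(nat \<Rightarrow> real) \<Rightarrow> real" where
  "znorm z = suminf z"

text \<open>x^k for k in N \<union> {\<infinity>}; x^\<infinity> is the limit of x^k for x in [0,1].\<close>
definition pow_enat :: "real \<Rightarrow> enat \<Rightarrow> real" where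
  "pow_enat x k = (case k of enat m \<Rightarrow> x ^ m | \<infinity> \<Rightarrow> (if x = 1 then 1 else 0))"

definition pgf :: "enat pmf \<Rightarrow> real \<Rightarrow> real" where
  "pgf Q x = (\<integral>k. pow_enat x k \<partial>measure_pmf Q)"

text \<open>The random measure eta*_g on labels, as a function of H_g = h, Z_g = z, Y*_g = y.
  Weight of label j.  (Outside nabla_inf, which is a Xi-null set, we use U_N.)\<close>
definition eta_weight :: "nat \<Rightarrow> bool \<Rightarrow> (nat \<Rightarrow> real) \<Rightarrow> (nat \<Rightarrow> nat) \<Rightarrow> nat \<Rightarrow> real" where
  "eta_weight N h z y j =
     (if h \<and> z \<in> nabla_inf
      then (\<Sum>m. z m * (if y m = j then 1 else 0))
             + (1 - znorm z) * (if j \<in> {1..N} then 1 / real N else 0)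
      else (if j \<in> {1..N} then 1 / real N else 0))"

definition eta_star :: "nat \<Rightarrow> bool \<Rightarrow> (nat \<Rightarrow> real) \<Rightarrow> (nat \<Rightarrow> nat) \<Rightarrow> nat measure" where
  "eta_star N h z y = density (count_space UNIV) (\<lambda>j. ennreal (eta_weight N h z y j))"

text \<open>Randomness of one generation g:
  (H_g, Z_g, (Y*_(g,m))_m, (K_(g,i))_i, (L_((g,i),j))_(i,j)).
  Only individuals i in {1..N} and labels j < K_(g,i) are relevant.\<close>
type_synonym gdata = "bool \<times> (nat \<Rightarrow> real) \<times> (nat \<Rightarrow> nat) \<times> (nat \<Rightarrow> enat) \<times> (nat \<Rightarrow> nat \<Rightarrow> nat)"

definition gspace :: "gdata measure" where
  "gspace = count_space UNIV \<Otimes>\<^sub>M (\<Pi>\<^sub>M m\<in>UNIV. (borel :: real measure))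
      \<Otimes>\<^sub>M (\<Pi>\<^sub>M m\<in>UNIV. count_space UNIV) \<Otimes>\<^sub>M (\<Pi>\<^sub>M i\<in>UNIV. count_space UNIV)
      \<Otimes>\<^sub>M (\<Pi>\<^sub>M i\<in>UNIV. \<Pi>\<^sub>M j\<in>UNIV. count_space UNIV)"

definition gen_law :: "nat \<Rightarrow> real \<Rightarrow> enat pmf \<Rightarrow> (nat \<Rightarrow> real) measure \<Rightarrow> gdata measure" where
  "gen_law N \<gamma> Q \<Xi> =
     bind (measure_pmf (bernoulli_pmf \<gamma>) \<Otimes>\<^sub>M \<Xi>
             \<Otimes>\<^sub>M (\<Pi>\<^sub>M m\<in>UNIV. measure_pmf (pmf_of_set {1..N}))
             \<Otimes>\<^sub>M (\<Pi>\<^sub>M i\<in>UNIV. measure_pmf Q))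
          (\<lambda>(h, z, y, k). distr (\<Pi>\<^sub>M i\<in>UNIV. \<Pi>\<^sub>M j\<in>UNIV. eta_star N h z y) gspace
                                 (\<lambda>l. (h, z, y, k, l)))"

definition gK :: "gdata \<Rightarrow> nat \<Rightarrow> enat" where
  "gK d = fst (snd (snd (snd d)))"

definition gL :: "gdata \<Rightarrow> nat \<Rightarrow> nat \<Rightarrow> nat" where
  "gL d = snd (snd (snd (snd d)))"

text \<open>Types: True means type 0.  Generation g+1 uses the randomness of generation g+1
  (given by Gs (Suc g)); individual i of generation g+1 has type 0 iff all its
  potential parents (g, L_((g+1,i),j)), j < K_(g+1,i), have type 0.\<close>
primrec type0 :: "(nat \<Rightarrow> gdata) \<Rightarrow> (nat \<Rightarrow> bool) \<Rightarrow> nat \<Rightarrow> nat \<Rightarrow> bool" where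
  "type0 Gs init 0 i = init i"
| "type0 Gs init (Suc g) i =
     (\<forall>j. enat j < gK (Gs (Suc g)) i \<longrightarrow> type0 Gs init g (gL (Gs (Suc g)) i j))"

definition freq0 :: "nat \<Rightarrow> (nat \<Rightarrow> gdata) \<Rightarrow> (nat \<Rightarrow> bool) \<Rightarrow> nat \<Rightarrow> real" where
  "freq0 N Gs init g = real (card {i \<in> {1..N}. type0 Gs init g i}) / real N"

definition nuN :: "enat pmf \<Rightarrow> (nat \<Rightarrow> real) measure \<Rightarrow> real \<Rightarrow> nat \<Rightarrow> real" where
  "nuN Q \<Xi> x n =
     (\<integral>(z, b). (pgf Q ((\<Sum>i. (if b i then z i else 0)) + x * (1 - znorm z))) ^ n
        \<partial>(\<Xi> \<Otimes>\<^sub>M (\<Pi>\<^sub>M i\<in>UNIV. measure_pmf (bernoulli_pmf x))))"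

definition S_fun :: "real \<Rightarrow> enat pmf \<Rightarrow> (nat \<Rightarrow> real) measure \<Rightarrow> real \<Rightarrow> nat \<Rightarrow> real" where
  "S_fun \<gamma> Q \<Xi> x n = (1 - \<gamma>) * (pgf Q x) ^ n + \<gamma> * nuN Q \<Xi> x n"

end

theory Submission
  imports Defs
begin

text \<open>Condition on generation \<open>g - 1\<close> and let \<open>T\<close> be its set of type-0 labels, so
  \<open>|T| = x N\<close>; the randomness of generation \<open>g\<close> is independent of the past.  Given
  \<open>(H, Z, Y\<^sup>*)\<close>, the labels are i.i.d. and fall into \<open>T\<close> with probability
  \<open>q = \<eta>\<^sup>*(T)\<close>, so an individual with \<open>K\<close> potential parents has only type-0 parents with
  probability \<open>q\<^sup>K\<close>; averaging over the i.i.d. \<open>K\<close> of \<open>n\<close> distinct individuals gives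
  \<open>\<phi>(q)\<^sup>n\<close>.  If \<open>H = 0\<close> then \<open>q = x\<close>; if \<open>H = 1\<close> then
  \<open>q = \<Sum>\<^sub>i Z\<^sub>i [Y\<^sup>*\<^sub>i \<in> T] + x (1 - |Z|)\<close>, and the indicators \<open>[Y\<^sup>*\<^sub>i \<in> T]\<close> are
  i.i.d. Bernoulli(\<open>x\<close>).  Averaging over \<open>H\<close> and \<open>Z\<close> gives \<open>S(x, n)\<close>.\<close>

section \<open>Infinite products of probability measures\<close>

lemma measurable_PiM_kernel:
  assumes F: "\<And>i. i \<in> I \<Longrightarrow> (\<lambda>p. F p i) \<in> measurable P (subprob_algebra (S i))"
    and Fp: "\<And>p i. p \<in> space P \<Longrightarrow> i \<in> I \<Longrightarrow> prob_space (F p i)"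
  shows "(\<lambda>p. PiM I (F p)) \<in> measurable P (subprob_algebra (PiM I S))"
proof -
  have setsF: "p \<in> space P \<Longrightarrow> i \<in> I \<Longrightarrow> sets (F p i) = sets (S i)" for p i
    using measurable_space[OF F] by (auto simp: space_subprob_algebra)
  then have spF: "p \<in> space P \<Longrightarrow> i \<in> I \<Longrightarrow> space (F p i) = space (S i)" for p i
    using sets_eq_imp_space_eq by blast
  show ?thesis
  proof (rule measurable_subprob_algebra_generated[OF sets_PiM Int_stable_prod_algebra prod_algebra_sets_into_space])
    fix p assume p: "p \<in> space P"
    show "subprob_space (PiM I (F p))"
      using p Fp by (intro prob_space_imp_subprob_space prob_space_PiM) auto
    show "sets (PiM I (F p)) = sets (PiM I S)"
      using p setsF by (intro sets_PiM_cong) auto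
  next
    fix A assume "A \<in> prod_algebra I S"
    then obtain J E where A: "A = prod_emb I S J (\<Pi>\<^sub>E j\<in>J. E j)"
      "finite J" "J \<subseteq> I" "\<And>i. i \<in> J \<Longrightarrow> E i \<in> sets (S i)"
      by (rule prod_algebraE) auto
    have "(\<lambda>p. \<Prod>j\<in>J. emeasure (F p j) (E j)) \<in> borel_measurable P"
    proof (intro borel_measurable_prod_ennreal)
      fix j assume "j \<in> J"
      then show "(\<lambda>p. emeasure (F p j) (E j)) \<in> borel_measurable P"
        using A F[of j] by (intro measurable_compose[OF _ measurable_emeasure_subprob_algebra]) auto
    qed
    moreover have "emeasure (PiM I (F p)) A = (\<Prod>j\<in>J. emeasure (F p j) (E j))" if p: "p \<in> space P" for p
    proof -
      have "A = prod_emb I (F p) J (\<Pi>\<^sub>E j\<in>J. E j)"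
        unfolding A(1) prod_emb_def using spF[OF p] by (auto simp: PiE_iff)
      then show ?thesis
        using p A setsF Fp by (simp add: emeasure_PiM_emb subsetD)
    qed
    ultimately show "(\<lambda>a. emeasure (Pi\<^sub>M I (F a)) A) \<in> borel_measurable P"
      by (subst measurable_cong[where g="\<lambda>p. \<Prod>j\<in>J. emeasure (F p j) (E j)"]) auto
  next
    have "emeasure (PiM I (F p)) (\<Pi>\<^sub>E i\<in>I. space (S i)) = 1" if p: "p \<in> space P" for p
      using prob_space.emeasure_space_1[OF prob_space_PiM[of I "F p"]] Fp[OF p] spF[OF p]
      by (simp add: space_PiM cong: PiE_cong)
    then show "(\<lambda>a. emeasure (Pi\<^sub>M I (F a)) (\<Pi>\<^sub>E i\<in>I. space (S i))) \<in> borel_measurable P"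
      by (subst measurable_cong[where g="\<lambda>p. 1"]) auto
  qed
qed

lemma measurable_PiM_pmf_component:
  assumes "i \<in> I" and "range f \<subseteq> space N"
  shows "(\<lambda>\<omega>. f (\<omega> i)) \<in> measurable (PiM I (\<lambda>_. measure_pmf p)) N"
proof (rule measurable_compose[of _ _ "measure_pmf p"])
  show "(\<lambda>\<omega>. \<omega> i) \<in> measurable (PiM I (\<lambda>_. measure_pmf p)) (measure_pmf p)"
    using assms(1) by (rule measurable_component_singleton)
  show "f \<in> measurable (measure_pmf p) N"
    using assms(2) by (subst measurable_cong_sets[OF sets_measure_pmf_count_space refl])
      (auto simp: measurable_count_space_eq1)
qed

lemma distr_PiM_iid_map_pmf:
  "distr (PiM (UNIV::nat set) (\<lambda>_. measure_pmf p)) (PiM UNIV (\<lambda>_. measure_pmf (map_pmf f p))) (\<lambda>\<omega> i. f (\<omega> i))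
     = PiM UNIV (\<lambda>_. measure_pmf (map_pmf f p))"
  (is "distr ?P ?R ?F = ?R")
proof (rule measure_eqI_PiM_infinite)
  have m: "?F \<in> measurable ?P ?R"
    by (rule measurable_PiM_single') (auto intro: measurable_PiM_pmf_component)
  show "sets (distr ?P ?R ?F) = sets ?R" "sets ?R = sets ?R" by simp_all
  show "finite_measure (distr ?P ?R ?F)"
    by (intro prob_space.finite_measure prob_space.prob_space_distr prob_space_PiM
        measure_pmf.prob_space_axioms m)
  fix A and J :: "nat set" assume J: "finite J" and A: "\<And>i. i \<in> J \<Longrightarrow> A i \<in> sets (measure_pmf (map_pmf f p))"
  have pre: "?F -` prod_emb UNIV (\<lambda>_. measure_pmf (map_pmf f p)) J (Pi\<^sub>E J A) \<inter> space ?P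
     = prod_emb UNIV (\<lambda>_. measure_pmf p) J (Pi\<^sub>E J (\<lambda>i. f -` A i))"
    by (auto simp: prod_emb_def space_PiM PiE_iff)
  have "emeasure (distr ?P ?R ?F) (prod_emb UNIV (\<lambda>_. measure_pmf (map_pmf f p)) J (Pi\<^sub>E J A))
      = emeasure ?P (prod_emb UNIV (\<lambda>_. measure_pmf p) J (Pi\<^sub>E J (\<lambda>i. f -` A i)))"
    using J A by (subst emeasure_distr[OF m]) (auto simp: pre intro!: sets_PiM_I)
  also have "\<dots> = (\<Prod>i\<in>J. emeasure (measure_pmf (map_pmf f p)) (A i))"
    using J by (subst emeasure_PiM_emb) (auto simp: emeasure_map_pmf measure_pmf.prob_space_axioms)
  also have "\<dots> = emeasure ?R (prod_emb UNIV (\<lambda>_. measure_pmf (map_pmf f p)) J (Pi\<^sub>E J A))"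
    using J A by (intro emeasure_PiM_emb[symmetric] measure_pmf.prob_space_axioms) auto
  finally show "emeasure (distr ?P ?R ?F) (prod_emb UNIV (\<lambda>_. measure_pmf (map_pmf f p)) J (Pi\<^sub>E J A))
    = emeasure ?R (prod_emb UNIV (\<lambda>_. measure_pmf (map_pmf f p)) J (Pi\<^sub>E J A))" .
qed

lemma nn_integral_PiM_iid_prod:
  assumes M: "prob_space M" and A: "finite A" and f: "f \<in> borel_measurable M"
  shows "(\<integral>\<^sup>+k. (\<Prod>i\<in>A. f (k i)) \<partial>PiM UNIV (\<lambda>_. M)) = (\<integral>\<^sup>+\<kappa>. f \<kappa> \<partial>M) ^ card A"
proof -
  let ?M = "\<lambda>_::'i. M"
  interpret product_sigma_finite ?M
    using M by (intro product_sigma_finite.intro prob_space_imp_sigma_finite)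
  have rm: "(\<lambda>\<omega>. \<lambda>n\<in>A. \<omega> n) \<in> measurable (PiM UNIV ?M) (PiM A ?M)"
    by (rule measurable_restrict_subset) simp
  have d: "distr (PiM UNIV ?M) (PiM A ?M) (\<lambda>\<omega>. \<lambda>n\<in>A. \<omega> n) = PiM A ?M"
    using distr_PiM_reindex[of UNIV ?M id A] M by simp
  have Gm: "(\<lambda>k. \<Prod>i\<in>A. f (k i)) \<in> borel_measurable (PiM A ?M)"
    using f by (intro borel_measurable_prod_ennreal measurable_compose[OF measurable_component_singleton])
  have "(\<integral>\<^sup>+k. (\<Prod>i\<in>A. f (k i)) \<partial>PiM UNIV ?M) = (\<integral>\<^sup>+k. (\<Prod>i\<in>A. f ((\<lambda>n\<in>A. k n) i)) \<partial>PiM UNIV ?M)"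
    by (intro nn_integral_cong prod.cong) auto
  also have "\<dots> = (\<integral>\<^sup>+k. (\<Prod>i\<in>A. f (k i)) \<partial>PiM A ?M)"
    by (subst d[symmetric], rule nn_integral_distr[OF rm, symmetric]) (simp add: Gm)
  also have "\<dots> = (\<Prod>i\<in>A. \<integral>\<^sup>+\<kappa>. f \<kappa> \<partial>M)"
    using product_nn_integral_prod[OF A, of "\<lambda>_. f"] f by simp
  finally show ?thesis by simp
qed

lemma nn_integral_pair_measure4:
  assumes "prob_space M2" "prob_space M3" "prob_space M4"
    and f: "f \<in> borel_measurable (M1 \<Otimes>\<^sub>M M2 \<Otimes>\<^sub>M M3 \<Otimes>\<^sub>M M4)"
  shows "integral\<^sup>N (M1 \<Otimes>\<^sub>M M2 \<Otimes>\<^sub>M M3 \<Otimes>\<^sub>M M4) f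
     = (\<integral>\<^sup>+a. \<integral>\<^sup>+b. \<integral>\<^sup>+c. \<integral>\<^sup>+d. f (a, b, c, d) \<partial>M4 \<partial>M3 \<partial>M2 \<partial>M1)"
proof -
  have ps34: "prob_space (M3 \<Otimes>\<^sub>M M4)" using assms by (intro prob_space_pair)
  interpret s34: sigma_finite_measure "M3 \<Otimes>\<^sub>M M4" by (rule prob_space_imp_sigma_finite[OF ps34])
  interpret s234: sigma_finite_measure "M2 \<Otimes>\<^sub>M M3 \<Otimes>\<^sub>M M4"
    using assms ps34 by (intro prob_space_imp_sigma_finite prob_space_pair)
  interpret s4: sigma_finite_measure "M4" using assms by (intro prob_space_imp_sigma_finite)
  have "integral\<^sup>N (M1 \<Otimes>\<^sub>M M2 \<Otimes>\<^sub>M M3 \<Otimes>\<^sub>M M4) f = (\<integral>\<^sup>+a. \<integral>\<^sup>+w. f (a, w) \<partial>(M2 \<Otimes>\<^sub>M M3 \<Otimes>\<^sub>M M4) \<partial>M1)"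
    using s234.nn_integral_fst[OF f] by simp
  also have "\<dots> = (\<integral>\<^sup>+a. \<integral>\<^sup>+b. \<integral>\<^sup>+w. f (a, b, w) \<partial>(M3 \<Otimes>\<^sub>M M4) \<partial>M2 \<partial>M1)"
    using s34.nn_integral_fst[OF measurable_Pair2[OF f]] by (intro nn_integral_cong) simp
  also have "\<dots> = (\<integral>\<^sup>+a. \<integral>\<^sup>+b. \<integral>\<^sup>+c. \<integral>\<^sup>+d. f (a, b, c, d) \<partial>M4 \<partial>M3 \<partial>M2 \<partial>M1)"
    using s4.nn_integral_fst[OF measurable_Pair2[OF measurable_Pair2[OF f]]]
    by (intro nn_integral_cong) simp
  finally show ?thesis .
qed

lemma emeasure_PiM_iid_initial_segment:
  assumes E: "prob_space E" and sE: "sets E = UNIV"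
  shows "emeasure (PiM (UNIV::nat set) (\<lambda>j. E)) {m. \<forall>j. enat j < \<kappa> \<longrightarrow> t (m j)}
    = ennreal (pow_enat (measure E {j. t j}) \<kappa>)"
proof -
  interpret E: prob_space E by fact
  define q where "q = measure E {j. t j}"
  have q01: "0 \<le> q" "q \<le> 1" unfolding q_def by auto
  have spE: "space E = UNIV" using sE sets.sets_into_space[of UNIV E] by auto
  have S: "{m. \<forall>j<n. t (m j)} = prod_emb UNIV (\<lambda>_. E) {..<n} (Pi\<^sub>E {..<n} (\<lambda>_. {j. t j}))" for n
    by (auto simp: prod_emb_def spE PiE_iff)
  have Sm: "emeasure (PiM (UNIV::nat set) (\<lambda>j. E)) {m. \<forall>j<n. t (m j)} = ennreal (q ^ n)" for n
    unfolding S using E sE q01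
    by (subst emeasure_PiM_emb) (auto simp: E.emeasure_eq_measure q_def ennreal_power)
  show ?thesis
  proof (cases \<kappa>)
    case (enat n)
    then show ?thesis using Sm[of n] by (simp add: pow_enat_def q_def)
  next
    case infinity
    have "(\<lambda>n. emeasure (PiM (UNIV::nat set) (\<lambda>j. E)) {m. \<forall>j<n. t (m j)})
        \<longlonglongrightarrow> emeasure (PiM (UNIV::nat set) (\<lambda>j. E)) (\<Inter>n. {m. \<forall>j<n. t (m j)})"
    proof (rule Lim_emeasure_decseq)
      show "range (\<lambda>n. {m. \<forall>j<n. t (m j)}) \<subseteq> sets (PiM (UNIV::nat set) (\<lambda>j. E))"
        unfolding S using sE by (auto intro!: sets_PiM_I)
    qed (auto simp: decseq_def Sm)
    moreover have "(\<Inter>n. {m. \<forall>j<n. t (m j)}) = {m. \<forall>j. enat j < \<kappa> \<longrightarrow> t (m j)}"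
      using infinity by auto
    ultimately have L1: "(\<lambda>n. ennreal (q ^ n))
        \<longlonglongrightarrow> emeasure (PiM (UNIV::nat set) (\<lambda>j. E)) {m. \<forall>j. enat j < \<kappa> \<longrightarrow> t (m j)}"
      by (simp add: Sm)
    have "(\<lambda>n. ennreal (q ^ n)) \<longlonglongrightarrow> ennreal (if q = 1 then 1 else 0)"
    proof (cases "q = 1")
      case False
      then have "(\<lambda>n. q ^ n) \<longlonglongrightarrow> 0" using q01 by (intro LIMSEQ_power_zero) simp
      then show ?thesis using False by (intro tendsto_ennrealI) simp
    qed simp
    then show ?thesis using LIMSEQ_unique[OF L1] infinity by (simp add: pow_enat_def q_def)
  qed
qed

lemma emeasure_PiM_iid_rows:
  assumes E: "prob_space E" and sE: "sets E = UNIV" and A: "finite A"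
  shows "emeasure (PiM (UNIV::nat set) (\<lambda>i. PiM (UNIV::nat set) (\<lambda>j. E)))
      {l. \<forall>i\<in>A. \<forall>j. enat j < k i \<longrightarrow> t (l i j)}
     = (\<Prod>i\<in>A. ennreal (pow_enat (measure E {j. t j}) (k i)))"
proof -
  let ?I = "PiM (UNIV::nat set) (\<lambda>j. E)"
  have spI: "space ?I = UNIV" using sE sets.sets_into_space[of UNIV E] by (auto simp: space_PiM)
  have setI: "{m. \<forall>j. enat j < k i \<longrightarrow> t (m j)} \<in> sets ?I" for i
  proof -
    have [measurable]: "Measurable.pred ?I (\<lambda>m. t (m j))" for j
      using sE by (intro measurable_compose[OF measurable_component_singleton]) (auto simp: pred_def)
    have "Measurable.pred ?I (\<lambda>m. \<forall>j. enat j < k i \<longrightarrow> t (m j))" by measurable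
    then show ?thesis using spI by (simp add: pred_def)
  qed
  have "{l. \<forall>i\<in>A. \<forall>j. enat j < k i \<longrightarrow> t (l i j)}
      = prod_emb UNIV (\<lambda>i. ?I) A (Pi\<^sub>E A (\<lambda>i. {m. \<forall>j. enat j < k i \<longrightarrow> t (m j)}))"
    by (auto simp: prod_emb_def spI PiE_iff)
  also have "emeasure (PiM UNIV (\<lambda>i. ?I)) \<dots> = (\<Prod>i\<in>A. emeasure ?I {m. \<forall>j. enat j < k i \<longrightarrow> t (m j)})"
    using A setI E by (intro emeasure_PiM_emb prob_space_PiM) auto
  finally show ?thesis
    using emeasure_PiM_iid_initial_segment[OF E sE] by simp
qed

section \<open>Generating functions on \<open>\<nat> \<union> {\<infinity>}\<close>\<close>

lemma pow_enat_bounds: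
  assumes "0 \<le> x" "x \<le> 1" shows "0 \<le> pow_enat x \<kappa>" "pow_enat x \<kappa> \<le> 1"
  using assms by (cases \<kappa>; simp add: pow_enat_def power_le_one)+

lemma borel_measurable_pow_enat[measurable]: "(\<lambda>x. pow_enat x \<kappa>) \<in> borel_measurable borel"
  by (cases \<kappa>) (simp_all add: pow_enat_def)

lemma measurable_pow_enat_compose:
  assumes f: "f \<in> borel_measurable M" and g: "g \<in> measurable M (count_space UNIV)"
  shows "(\<lambda>w. pow_enat (f w) (g w)) \<in> borel_measurable M"
  using measurable_compose[OF f borel_measurable_pow_enat] g
  by (intro measurable_compose_countable'[where f="\<lambda>k w. pow_enat (f w) k" and g=g]) auto

lemma pgf_integrable:
  assumes "0 \<le> q" "q \<le> 1" shows "integrable (measure_pmf Q) (\<lambda>k. pow_enat q k)"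
  using pow_enat_bounds[OF assms] by (intro measure_pmf.integrable_const_bound[where B=1]) auto

lemma pgf_bounds:
  assumes "0 \<le> q" "q \<le> 1" shows "0 \<le> pgf Q q" "pgf Q q \<le> 1"
proof -
  show "0 \<le> pgf Q q" unfolding pgf_def using pow_enat_bounds[OF assms] by (intro integral_nonneg_AE) auto
  have "pgf Q q \<le> (\<integral>k. 1 \<partial>measure_pmf Q)" unfolding pgf_def
    using pow_enat_bounds[OF assms] pgf_integrable[OF assms] by (intro integral_mono) auto
  then show "pgf Q q \<le> 1" by simp
qed

lemma nn_integral_pow_enat_eq_pgf:
  assumes "0 \<le> q" "q \<le> 1" shows "(\<integral>\<^sup>+k. ennreal (pow_enat q k) \<partial>measure_pmf Q) = ennreal (pgf Q q)"
  unfolding pgf_def using pgf_integrable[OF assms] pow_enat_bounds[OF assms]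
  by (intro nn_integral_eq_integral) auto

lemma borel_measurable_pgf[measurable]: "pgf Q \<in> borel_measurable borel"
proof -
  have sf: "sigma_finite_measure (measure_pmf Q)"
    by (rule prob_space_imp_sigma_finite) (rule measure_pmf.prob_space_axioms)
  have "(\<lambda>w. pow_enat (fst w) (snd w)) \<in> borel_measurable (borel \<Otimes>\<^sub>M measure_pmf Q)"
  proof (rule measurable_pow_enat_compose)
    show "fst \<in> borel_measurable (borel \<Otimes>\<^sub>M measure_pmf Q)" by (rule measurable_fst'') simp
    show "snd \<in> measurable (borel \<Otimes>\<^sub>M measure_pmf Q) (count_space UNIV)"
      using measurable_snd[of borel "measure_pmf Q"]
      by (simp add: measurable_cong_sets[OF refl sets_measure_pmf_count_space])
  qed
  then show ?thesis
    unfolding pgf_def[abs_def] by (intro sigma_finite_measure.borel_measurable_lebesgue_integral[OF sf]) (simp add: case_prod_beta)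
qed

section \<open>The random measure \<open>\<eta>\<^sup>*\<close>\<close>

lemma nabla_inf_summable: "z \<in> nabla_inf \<Longrightarrow> summable z"
  and nabla_inf_nonneg: "z \<in> nabla_inf \<Longrightarrow> 0 \<le> z i"
  and nabla_inf_znorm_le_1: "z \<in> nabla_inf \<Longrightarrow> znorm z \<le> 1"
  by (auto simp: nabla_inf_def znorm_def)

lemma summable_nabla_inf_mult:
  assumes "z \<in> nabla_inf" and "\<And>m. 0 \<le> f m" "\<And>m. f m \<le> (1::real)"
  shows "summable (\<lambda>m. z m * f m)"
proof (rule summable_comparison_test'[OF nabla_inf_summable[OF assms(1)]])
  fix m show "norm (z m * f m) \<le> z m"
    using nabla_inf_nonneg[OF assms(1), of m] assms(2,3)[of m] by (simp add: abs_mult mult_left_le)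
qed

lemma nabla_inf_selected_sum:
  assumes z: "z \<in> nabla_inf"
  shows "summable (\<lambda>i. if b i then z i else 0)"
    and "0 \<le> (\<Sum>i. if b i then z i else 0)" "(\<Sum>i. if b i then z i else 0) \<le> znorm z"
proof -
  have "(\<lambda>i. if b i then z i else 0) = (\<lambda>i. z i * (if b i then 1 else 0))" by auto
  then show sm: "summable (\<lambda>i. if b i then z i else 0)"
    using summable_nabla_inf_mult[OF z] by simp
  show "0 \<le> (\<Sum>i. if b i then z i else 0)"
    using sm nabla_inf_nonneg[OF z] by (intro suminf_nonneg) auto
  show "(\<Sum>i. if b i then z i else 0) \<le> znorm z"
    unfolding znorm_def using sm nabla_inf_summable[OF z] nabla_inf_nonneg[OF z] by (intro suminf_le) auto
qed

lemma Y_value_bounds: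
  assumes z: "z \<in> nabla_inf" and x: "0 \<le> x" "x \<le> 1"
  shows "0 \<le> (\<Sum>i. if b i then z i else 0) + x * (1 - znorm z)"
    and "(\<Sum>i. if b i then z i else 0) + x * (1 - znorm z) \<le> 1"
proof -
  have "x * (1 - znorm z) \<le> 1 - znorm z"
    using x nabla_inf_znorm_le_1[OF z] by (intro mult_left_le_one_le) auto
  then show "0 \<le> (\<Sum>i. if b i then z i else 0) + x * (1 - znorm z)"
    and "(\<Sum>i. if b i then z i else 0) + x * (1 - znorm z) \<le> 1"
    using nabla_inf_selected_sum[OF z, of b] nabla_inf_znorm_le_1[OF z] x by auto
qed

lemma sets_eta_star[simp]: "sets (eta_star N h z y) = UNIV"
  and space_eta_star[simp]: "space (eta_star N h z y) = UNIV"
  by (simp_all add: eta_star_def)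

lemma nn_integral_point_masses:
  fixes y :: "nat \<Rightarrow> nat"
  assumes z: "z \<in> nabla_inf"
  shows "(\<integral>\<^sup>+j. ennreal (\<Sum>m. if y m = j then z m else 0) * indicator T j \<partial>count_space UNIV)
    = ennreal (\<Sum>m. if y m \<in> T then z m else 0)"
proof -
  have "ennreal (\<Sum>m. if y m = j then z m else 0) = (\<integral>\<^sup>+m. ennreal (if y m = j then z m else 0) \<partial>count_space UNIV)" for j
    using nabla_inf_selected_sum[OF z, of "\<lambda>m. y m = j"] nabla_inf_nonneg[OF z]
    by (subst nn_integral_count_space_nat) (simp add: suminf_ennreal2)
  then have "(\<integral>\<^sup>+j. ennreal (\<Sum>m. if y m = j then z m else 0) * indicator T j \<partial>count_space UNIV)
      = (\<integral>\<^sup>+j. (\<integral>\<^sup>+m. ennreal (if y m = j then z m else 0) * indicator T j \<partial>count_space UNIV) \<partial>count_space UNIV)"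
    by (simp add: nn_integral_multc)
  also have "\<dots> = (\<integral>\<^sup>+m. (\<integral>\<^sup>+j. ennreal (if y m = j then z m else 0) * indicator T j \<partial>count_space UNIV) \<partial>count_space UNIV)"
    by (intro pair_sigma_finite.Fubini' pair_sigma_finite.intro sigma_finite_measure_count_space_countable)
       (auto simp: pair_measure_countable)
  also have "\<dots> = (\<integral>\<^sup>+m. ennreal (if y m \<in> T then z m else 0) \<partial>count_space UNIV)"
  proof (intro nn_integral_cong)
    fix m
    have "(\<integral>\<^sup>+j. ennreal (if y m = j then z m else 0) * indicator T j \<partial>count_space UNIV)
        = (\<integral>\<^sup>+j. ennreal (if y m \<in> T then z m else 0) * indicator {y m} j \<partial>count_space UNIV)"
      by (intro nn_integral_cong) (auto simp: indicator_def)
    then show "(\<integral>\<^sup>+j. ennreal (if y m = j then z m else 0) * indicator T j \<partial>count_space UNIV)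
        = ennreal (if y m \<in> T then z m else 0)"
      by simp
  qed
  also have "\<dots> = ennreal (\<Sum>m. if y m \<in> T then z m else 0)"
    using nabla_inf_selected_sum[OF z, of "\<lambda>m. y m \<in> T"] nabla_inf_nonneg[OF z]
    by (subst nn_integral_count_space_nat) (simp add: suminf_ennreal2)
  finally show ?thesis .
qed

lemma emeasure_eta_star_nabla:
  assumes z: "z \<in> nabla_inf"
  shows "emeasure (eta_star N True z y) T =
     ennreal ((\<Sum>m. if y m \<in> T then z m else 0) + (1 - znorm z) * (real (card (T \<inter> {1..N})) / real N))"
proof -
  let ?D = "\<lambda>j. \<Sum>m. if y m = j then z m else 0"
  let ?U = "(1 - znorm z) / real N"
  have U: "0 \<le> ?U" using nabla_inf_znorm_le_1[OF z] by simp
  have w: "eta_weight N True z y j = ?D j + (if j \<in> {1..N} then ?U else 0)" for j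
  proof -
    have "(\<lambda>m. z m * (if y m = j then 1 else 0)) = (\<lambda>m. if y m = j then z m else 0)" by auto
    then show ?thesis using z by (simp add: eta_weight_def)
  qed
  have "emeasure (eta_star N True z y) T
      = (\<integral>\<^sup>+j. ennreal (?D j) * indicator T j \<partial>count_space UNIV)
        + (\<integral>\<^sup>+j. ennreal ?U * indicator (T \<inter> {1..N}) j \<partial>count_space UNIV)"
    unfolding eta_star_def w using nabla_inf_selected_sum(2)[OF z] U
    by (subst nn_integral_add[symmetric])
       (auto simp: emeasure_density ennreal_plus[symmetric] indicator_def intro!: nn_integral_cong
         simp del: ennreal_plus)
  also have "(\<integral>\<^sup>+j. ennreal ?U * indicator (T \<inter> {1..N}) j \<partial>count_space UNIV)
      = ennreal ((1 - znorm z) * (real (card (T \<inter> {1..N})) / real N))"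
    using U by (subst nn_integral_cmult_indicator) (auto simp: ennreal_of_nat_eq_real_of_nat ennreal_mult[symmetric])
  finally show ?thesis
    using nabla_inf_selected_sum(2)[OF z] nabla_inf_znorm_le_1[OF z]
    by (simp add: nn_integral_point_masses[OF z] ennreal_plus)
qed

lemma emeasure_eta_star_uniform:
  assumes "\<not> (h \<and> z \<in> nabla_inf)"
  shows "emeasure (eta_star N h z y) T = ennreal (real (card (T \<inter> {1..N})) / real N)"
proof -
  have "emeasure (eta_star N h z y) T = (\<integral>\<^sup>+j. ennreal (1 / real N) * indicator (T \<inter> {1..N}) j \<partial>count_space UNIV)"
    unfolding eta_star_def eta_weight_def using assms
    by (auto simp: emeasure_density indicator_def intro!: nn_integral_cong)
  also have "\<dots> = ennreal (1 / real N) * of_nat (card (T \<inter> {1..N}))"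
    by (subst nn_integral_cmult_indicator) auto
  finally show ?thesis
    by (simp add: ennreal_of_nat_eq_real_of_nat ennreal_mult[symmetric])
qed

lemma prob_space_eta_star:
  assumes "N \<ge> 1" shows "prob_space (eta_star N h z y)"
proof
  show "emeasure (eta_star N h z y) (space (eta_star N h z y)) = 1"
  proof (cases "h \<and> z \<in> nabla_inf")
    case True
    then have "0 \<le> znorm z" "znorm z \<le> 1"
      using nabla_inf_selected_sum(2)[of z "\<lambda>_. True"] nabla_inf_znorm_le_1 by (auto simp: znorm_def)
    then show ?thesis
      using True assms by (simp add: emeasure_eta_star_nabla znorm_def)
  qed (use assms in \<open>simp add: emeasure_eta_star_uniform\<close>)
qed

lemma measure_eta_star:
  "measure (eta_star N h z y) T =
    (if h \<and> z \<in> nabla_inf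
     then (\<Sum>m. if y m \<in> T then z m else 0) + (1 - znorm z) * (real (card (T \<inter> {1..N})) / real N)
     else real (card (T \<inter> {1..N})) / real N)"
proof (cases "h \<and> z \<in> nabla_inf")
  case True
  then have "0 \<le> (\<Sum>m. if y m \<in> T then z m else 0)" "0 \<le> (1 - znorm z) * (real (card (T \<inter> {1..N})) / real N)"
    using nabla_inf_selected_sum(2)[of z "\<lambda>m. y m \<in> T"] nabla_inf_znorm_le_1[of z] by auto
  then show ?thesis
    using True by (simp add: measure_def emeasure_eta_star_nabla ennreal_plus[symmetric] del: ennreal_plus)
next
  case False
  then show ?thesis unfolding if_not_P[OF False] by (simp add: measure_def emeasure_eta_star_uniform)
qed

section \<open>The law of one generation\<close>

abbreviation "Z_space \<equiv> (\<Pi>\<^sub>M m\<in>(UNIV::nat set). (borel :: real measure))"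
abbreviation "Ystar_space \<equiv> (\<Pi>\<^sub>M m\<in>(UNIV::nat set). count_space (UNIV::nat set))"
abbreviation "K_space \<equiv> (\<Pi>\<^sub>M m\<in>(UNIV::nat set). count_space (UNIV::enat set))"
abbreviation "L_space \<equiv> (\<Pi>\<^sub>M i\<in>(UNIV::nat set). \<Pi>\<^sub>M j\<in>(UNIV::nat set). count_space (UNIV::nat set))"
abbreviation "param_space \<equiv> count_space (UNIV::bool set) \<Otimes>\<^sub>M Z_space \<Otimes>\<^sub>M Ystar_space \<Otimes>\<^sub>M K_space"

abbreviation "Ystar_law N \<equiv> PiM (UNIV::nat set) (\<lambda>_. measure_pmf (pmf_of_set {1..N}))"
abbreviation "K_law Q \<equiv> PiM (UNIV::nat set) (\<lambda>_. measure_pmf (Q::enat pmf))"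
abbreviation "bernoulli_seq x \<equiv> PiM (UNIV::nat set) (\<lambda>_. measure_pmf (bernoulli_pmf x))"

lemma measurable_Z_space_component[measurable]: "(\<lambda>z. z i) \<in> borel_measurable Z_space"
  and measurable_Ystar_space_component[measurable]: "(\<lambda>y. y i) \<in> measurable Ystar_space (count_space UNIV)"
  and measurable_K_space_component[measurable]: "(\<lambda>k. k i) \<in> measurable K_space (count_space UNIV)"
  and measurable_L_space_component[measurable]: "(\<lambda>l. l i j) \<in> measurable L_space (count_space UNIV)"
  by (auto intro!: measurable_component_singleton measurable_compose[OF measurable_component_singleton])

lemma pred_nabla_inf[measurable]: "Measurable.pred Z_space (\<lambda>z. z \<in> nabla_inf)"
proof -
  have *: "(z \<in> nabla_inf) = ((\<forall>i. 0 \<le> z i) \<and> (\<forall>i. z (Suc i) \<le> z i) \<and> Cauchy (\<lambda>n. \<Sum>i<n. z i) \<and> suminf z \<le> 1)" for z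
    by (simp add: nabla_inf_def summable_iff_convergent Cauchy_convergent_iff)
  have [measurable]: "Measurable.pred Z_space (\<lambda>z. Cauchy (\<lambda>n. \<Sum>i<n. z i))"
    unfolding pred_def using sets_Collect_Cauchy[of "\<lambda>n z. \<Sum>i<n. z i"] by measurable
  have [measurable]: "Measurable.pred Z_space (\<lambda>z. z (Suc i) \<le> z i)" for i
    unfolding pred_def by (rule borel_measurable_le) measurable
  show ?thesis unfolding * by measurable
qed

definition eta_param :: "nat \<Rightarrow> bool \<times> (nat \<Rightarrow> real) \<times> (nat \<Rightarrow> nat) \<times> (nat \<Rightarrow> enat) \<Rightarrow> nat measure" where
  "eta_param N p = eta_star N (fst p) (fst (snd p)) (fst (snd (snd p)))"

definition label_kernel :: "nat \<Rightarrow> bool \<times> (nat \<Rightarrow> real) \<times> (nat \<Rightarrow> nat) \<times> (nat \<Rightarrow> enat) \<Rightarrow> (nat \<Rightarrow> nat \<Rightarrow> nat) measure" where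
  "label_kernel N p = PiM UNIV (\<lambda>i. PiM UNIV (\<lambda>j. eta_param N p))"

definition param_law :: "nat \<Rightarrow> real \<Rightarrow> enat pmf \<Rightarrow> (nat \<Rightarrow> real) measure \<Rightarrow> (bool \<times> (nat \<Rightarrow> real) \<times> (nat \<Rightarrow> nat) \<times> (nat \<Rightarrow> enat)) measure" where
  "param_law N \<gamma> Q \<Xi> = measure_pmf (bernoulli_pmf \<gamma>) \<Otimes>\<^sub>M \<Xi> \<Otimes>\<^sub>M Ystar_law N \<Otimes>\<^sub>M K_law Q"

lemma sets_param_law: "sets \<Xi> = sets Z_space \<Longrightarrow> sets (param_law N \<gamma> Q \<Xi>) = sets param_space"
  unfolding param_law_def by (intro sets_pair_measure_cong sets_PiM_cong) simp_all

lemma space_gspace: "space gspace = UNIV"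
  by (simp add: gspace_def space_pair_measure space_PiM)

lemma measurable_eta_param:
  assumes "N \<ge> 1"
  shows "eta_param N \<in> measurable param_space (subprob_algebra (count_space UNIV))"
proof (rule measurable_subprob_algebra)
  fix p show "subprob_space (eta_param N p)"
    unfolding eta_param_def by (intro prob_space_imp_subprob_space prob_space_eta_star assms)
  show "sets (eta_param N p) = sets (count_space UNIV)" by (simp add: eta_param_def)
next
  fix T :: "nat set"
  have eq: "emeasure (eta_param N p) T = ennreal
     (if fst p \<and> fst (snd p) \<in> nabla_inf
      then (\<Sum>m. if fst (snd (snd p)) m \<in> T then fst (snd p) m else 0)
           + (1 - suminf (fst (snd p))) * (real (card (T \<inter> {1..N})) / real N)
      else real (card (T \<inter> {1..N})) / real N)" for p
    unfolding eta_param_def using prob_space_eta_star[OF assms]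
    by (simp add: finite_measure.emeasure_eq_measure prob_space.finite_measure measure_eta_star znorm_def)
  show "(\<lambda>p. emeasure (eta_param N p) T) \<in> borel_measurable param_space"
    unfolding eq by measurable
qed

lemma measurable_label_kernel:
  assumes "N \<ge> 1" "sets \<Xi> = sets Z_space"
  shows "label_kernel N \<in> measurable (param_law N \<gamma> Q \<Xi>) (subprob_algebra L_space)"
proof -
  have "label_kernel N \<in> measurable param_space (subprob_algebra L_space)"
    unfolding label_kernel_def
  proof (rule measurable_PiM_kernel)
    show "(\<lambda>p. PiM UNIV (\<lambda>j. eta_param N p)) \<in> measurable param_space (subprob_algebra (PiM UNIV (\<lambda>j. count_space UNIV)))"
      by (rule measurable_PiM_kernel[OF measurable_eta_param[OF assms(1)]])
        (simp add: eta_param_def prob_space_eta_star[OF assms(1)])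
  qed (simp add: eta_param_def prob_space_eta_star[OF assms(1)] prob_space_PiM)
  then show ?thesis using measurable_cong_sets[OF sets_param_law[OF assms(2)] refl] by blast
qed

lemma emeasure_gen_law:
  assumes N: "N \<ge> 1" and Xs: "sets \<Xi> = sets Z_space" and B: "B \<in> sets gspace"
  shows "emeasure (gen_law N \<gamma> Q \<Xi>) B = (\<integral>\<^sup>+p. emeasure (label_kernel N p)
      {l. (fst p, fst (snd p), fst (snd (snd p)), snd (snd (snd p)), l) \<in> B} \<partial>param_law N \<gamma> Q \<Xi>)"
proof -
  define F where "F = (\<lambda>(p::bool \<times> (nat \<Rightarrow> real) \<times> (nat \<Rightarrow> nat) \<times> (nat \<Rightarrow> enat)) (l::nat \<Rightarrow> nat \<Rightarrow> nat).
     (fst p, fst (snd p), fst (snd (snd p)), snd (snd (snd p)), l))"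
  have K: "(\<lambda>(h, z, y, k). distr (\<Pi>\<^sub>M i\<in>UNIV. \<Pi>\<^sub>M j\<in>UNIV. eta_star N h z y) gspace (\<lambda>l. (h, z, y, k, l)))
       = (\<lambda>p. distr (label_kernel N p) gspace (F p))"
    by (auto simp: fun_eq_iff label_kernel_def eta_param_def F_def split: prod.split)
  have "case_prod F \<in> measurable (param_space \<Otimes>\<^sub>M L_space) gspace"
    unfolding F_def gspace_def by measurable
  then have Fm: "case_prod F \<in> measurable (param_law N \<gamma> Q \<Xi> \<Otimes>\<^sub>M L_space) gspace"
    using measurable_cong_sets[OF sets_pair_measure_cong[OF sets_param_law[OF Xs] refl] refl] by blast
  have sets_kernel: "sets (label_kernel N p) = sets L_space" for p
    unfolding label_kernel_def by (intro sets_PiM_cong) (auto simp: eta_param_def)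
  have "F p \<in> measurable L_space gspace" for p
    unfolding F_def gspace_def by (intro measurable_Pair measurable_const measurable_ident_sets) (auto simp: space_PiM)
  then have Fp: "F p \<in> measurable (label_kernel N p) gspace" for p
    using measurable_cong_sets[OF sets_kernel refl] by blast
  have "space (param_law N \<gamma> Q \<Xi>) \<noteq> {}"
    using sets_param_law[OF Xs, THEN sets_eq_imp_space_eq] by (simp add: space_pair_measure space_PiM)
  then have "emeasure (gen_law N \<gamma> Q \<Xi>) B = (\<integral>\<^sup>+p. emeasure (distr (label_kernel N p) gspace (F p)) B \<partial>param_law N \<gamma> Q \<Xi>)"
    unfolding gen_law_def K param_law_def[symmetric]
    by (rule emeasure_bind[OF _ measurable_distr2[OF Fm measurable_label_kernel[OF N Xs]] B])
  also have "\<dots> = (\<integral>\<^sup>+p. emeasure (label_kernel N p) {l. (fst p, fst (snd p), fst (snd (snd p)), snd (snd (snd p)), l) \<in> B} \<partial>param_law N \<gamma> Q \<Xi>)"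
    using B sets_eq_imp_space_eq[OF sets_kernel]
    by (intro nn_integral_cong, subst emeasure_distr[OF Fp B]) (simp_all add: F_def vimage_def space_PiM)
  finally show ?thesis .
qed

definition parents_satisfy :: "nat set \<Rightarrow> (nat \<Rightarrow> bool) \<Rightarrow> gdata set" where
  "parents_satisfy A t = {d. \<forall>i\<in>A. \<forall>j. enat j < gK d i \<longrightarrow> t (gL d i j)}"

lemma measurable_gK[measurable]: "(\<lambda>d. gK d i) \<in> measurable gspace (count_space UNIV)"
  unfolding gK_def gspace_def by measurable

lemma measurable_gL[measurable]: "(\<lambda>d. gL d i j) \<in> measurable gspace (count_space UNIV)"
  unfolding gL_def gspace_def by measurable

lemma sets_parents_satisfy: "parents_satisfy A t \<in> sets gspace"
proof -
  have [measurable]: "Measurable.pred gspace (\<lambda>d. enat j < gK d i)" for i j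
    using measurable_compose[OF measurable_gK, of "\<lambda>k. enat j < k" "count_space UNIV" i] by simp
  have [measurable]: "Measurable.pred gspace (\<lambda>d. t (gL d i j))" for i j
    using measurable_compose[OF measurable_gL, of t "count_space UNIV" i j] by simp
  have "Measurable.pred gspace (\<lambda>d. \<forall>i\<in>A. \<forall>j. enat j < gK d i \<longrightarrow> t (gL d i j))" by measurable
  then show ?thesis unfolding parents_satisfy_def pred_def by (simp add: space_gspace)
qed

lemma borel_measurable_prod_pow_enat_eta_param:
  assumes N: "N \<ge> 1"
  shows "(\<lambda>p. \<Prod>i\<in>A. ennreal (pow_enat (measure (eta_param N p) T) (snd (snd (snd p)) i)))
    \<in> borel_measurable param_space"
proof -
  have "(\<lambda>p. emeasure (eta_param N p) T) \<in> borel_measurable param_space"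
    by (rule measurable_compose[OF measurable_eta_param[OF N] measurable_emeasure_subprob_algebra]) simp
  then have q: "(\<lambda>p. measure (eta_param N p) T) \<in> borel_measurable param_space"
    unfolding measure_def by measurable
  have k: "(\<lambda>p::bool \<times> (nat \<Rightarrow> real) \<times> (nat \<Rightarrow> nat) \<times> (nat \<Rightarrow> enat). snd (snd (snd p)) i)
      \<in> measurable param_space (count_space UNIV)" for i
    by measurable
  show ?thesis
    by (intro borel_measurable_prod_ennreal measurable_compose[OF measurable_pow_enat_compose[OF q k] measurable_ennreal])
qed

lemma emeasure_gen_law_parents_satisfy:
  assumes N: "N \<ge> 1" and Xs: "sets \<Xi> = sets Z_space" and Xp: "prob_space \<Xi>" and A: "finite A"
  shows "emeasure (gen_law N \<gamma> Q \<Xi>) (parents_satisfy A t)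
    = (\<integral>\<^sup>+h. \<integral>\<^sup>+z. \<integral>\<^sup>+y. ennreal (pgf Q (measure (eta_star N h z y) {j. t j}) ^ card A)
        \<partial>Ystar_law N \<partial>\<Xi> \<partial>measure_pmf (bernoulli_pmf \<gamma>))"
proof -
  define f where "f p = (\<Prod>i\<in>A. ennreal (pow_enat (measure (eta_param N p) {j. t j}) (snd (snd (snd p)) i)))" for p
  have "emeasure (label_kernel N p)
      {l. (fst p, fst (snd p), fst (snd (snd p)), snd (snd (snd p)), l) \<in> parents_satisfy A t} = f p" for p
  proof -
    have "{l. (fst p, fst (snd p), fst (snd (snd p)), snd (snd (snd p)), l) \<in> parents_satisfy A t}
        = {l. \<forall>i\<in>A. \<forall>j. enat j < snd (snd (snd p)) i \<longrightarrow> t (l i j)}"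
      by (simp add: parents_satisfy_def gK_def gL_def)
    then show ?thesis
      unfolding label_kernel_def f_def eta_param_def
      by (simp only: emeasure_PiM_iid_rows[OF prob_space_eta_star[OF N] sets_eta_star A])
  qed
  then have "emeasure (gen_law N \<gamma> Q \<Xi>) (parents_satisfy A t) = (\<integral>\<^sup>+p. f p \<partial>param_law N \<gamma> Q \<Xi>)"
    by (simp add: emeasure_gen_law[OF N Xs sets_parents_satisfy])
  also have "\<dots> = (\<integral>\<^sup>+h. \<integral>\<^sup>+z. \<integral>\<^sup>+y. \<integral>\<^sup>+k. f (h, z, y, k) \<partial>K_law Q \<partial>Ystar_law N \<partial>\<Xi> \<partial>measure_pmf (bernoulli_pmf \<gamma>))"
  proof -
    have "f \<in> borel_measurable (param_law N \<gamma> Q \<Xi>)"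
      using borel_measurable_prod_pow_enat_eta_param[OF N] measurable_cong_sets[OF sets_param_law[OF Xs] refl]
      unfolding f_def by blast
    moreover have "prob_space (Ystar_law N)" "prob_space (K_law Q)"
      by (simp_all add: prob_space_PiM measure_pmf.prob_space_axioms)
    ultimately show ?thesis unfolding param_law_def
      by (intro nn_integral_pair_measure4 Xp)
  qed
  also have "\<dots> = (\<integral>\<^sup>+h. \<integral>\<^sup>+z. \<integral>\<^sup>+y. ennreal (pgf Q (measure (eta_star N h z y) {j. t j}) ^ card A)
        \<partial>Ystar_law N \<partial>\<Xi> \<partial>measure_pmf (bernoulli_pmf \<gamma>))"
  proof (intro nn_integral_cong)
    fix h z y
    let ?q = "measure (eta_star N h z y) {j. t j}"
    have q: "0 \<le> ?q" "?q \<le> 1"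
      using prob_space_eta_star[OF N] by (auto intro: prob_space.prob_le_1)
    have m: "(\<lambda>\<kappa>. ennreal (pow_enat ?q \<kappa>)) \<in> borel_measurable (measure_pmf Q)"
      by (simp add: measurable_cong_sets[OF sets_measure_pmf_count_space refl])
    then show "(\<integral>\<^sup>+k. f (h, z, y, k) \<partial>K_law Q) = ennreal (pgf Q ?q ^ card A)"
      unfolding f_def eta_param_def using pgf_bounds(1)[OF q]
        nn_integral_PiM_iid_prod[OF measure_pmf.prob_space_axioms A m]
      by (simp add: nn_integral_pow_enat_eq_pgf[OF q] ennreal_power)
  qed
  finally show ?thesis .
qed

lemma map_pmf_of_set_mem_eq_bernoulli:
  assumes S: "finite S" "S \<noteq> {}"
  shows "map_pmf (\<lambda>j. j \<in> T) (pmf_of_set S) = bernoulli_pmf (real (card (T \<inter> S)) / real (card S))"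
proof (rule pmf_eqI)
  fix b :: bool
  have c: "card (T \<inter> S) \<le> card S" using S by (intro card_mono) auto
  have pos: "card S > 0" using S by (simp add: card_gt_0_iff)
  have "pmf (map_pmf (\<lambda>j. j \<in> T) (pmf_of_set S)) b = real (card (S \<inter> (\<lambda>j. j \<in> T) -` {b})) / real (card S)"
    using S by (simp add: pmf_map measure_pmf_of_set)
  also have "\<dots> = pmf (bernoulli_pmf (real (card (T \<inter> S)) / real (card S))) b"
  proof (cases b)
    case True
    then show ?thesis using c pos by (simp add: Int_commute vimage_def)
  next
    case False
    have "S \<inter> (\<lambda>j. j \<in> T) -` {False} = S - (T \<inter> S)" by auto
    then have "card (S \<inter> (\<lambda>j. j \<in> T) -` {False}) = card S - card (T \<inter> S)"
      using S by (simp add: card_Diff_subset)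
    then show ?thesis using False c pos by (simp add: of_nat_diff field_simps)
  qed
  finally show "pmf (map_pmf (\<lambda>j. j \<in> T) (pmf_of_set S)) b = pmf (bernoulli_pmf (real (card (T \<inter> S)) / real (card S))) b" .
qed

lemma nn_integral_Ystar_law_indicators:
  assumes N: "N \<ge> 1" and x: "x = real (card (T \<inter> {1..N})) / real N"
    and F: "F \<in> borel_measurable (bernoulli_seq x)"
  shows "(\<integral>\<^sup>+y. F (\<lambda>i. y i \<in> T) \<partial>Ystar_law N) = (\<integral>\<^sup>+b. F b \<partial>bernoulli_seq x)"
proof -
  let ?B = "PiM (UNIV::nat set) (\<lambda>_. measure_pmf (map_pmf (\<lambda>j. j \<in> T) (pmf_of_set {1..N})))"
  have B: "?B = bernoulli_seq x"
    using map_pmf_of_set_mem_eq_bernoulli[of "{1..N}" T] N x by simp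
  have m: "(\<lambda>\<omega> i. \<omega> i \<in> T) \<in> measurable (Ystar_law N) ?B"
    by (rule measurable_PiM_single') (auto intro: measurable_PiM_pmf_component)
  have "(\<integral>\<^sup>+y. F (\<lambda>i. y i \<in> T) \<partial>Ystar_law N) = (\<integral>\<^sup>+b. F b \<partial>distr (Ystar_law N) ?B (\<lambda>\<omega> i. \<omega> i \<in> T))"
    using F B by (intro nn_integral_distr[OF m, symmetric]) simp
  also have "\<dots> = (\<integral>\<^sup>+b. F b \<partial>?B)"
    using distr_PiM_iid_map_pmf[of "pmf_of_set {1..N}" "\<lambda>j. j \<in> T"] by simp
  finally show ?thesis
    unfolding B .
qed

lemma borel_measurable_nuN_integrand:
  "(\<lambda>w. pgf Q ((\<Sum>i. if snd w i then fst w i else 0) + x * (1 - znorm (fst w))) ^ n)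
     \<in> borel_measurable (Z_space \<Otimes>\<^sub>M bernoulli_seq x)"
proof -
  have [measurable]: "(\<lambda>b::nat \<Rightarrow> bool. if b i then 1 else 0 :: real) \<in> borel_measurable (bernoulli_seq x)" for i
    by (rule measurable_PiM_pmf_component) auto
  have "(\<lambda>w::(nat \<Rightarrow> real) \<times> (nat \<Rightarrow> bool). fst w i * (if snd w i then 1 else 0))
      \<in> borel_measurable (Z_space \<Otimes>\<^sub>M bernoulli_seq x)" for i
    by measurable
  then have [measurable]: "(\<lambda>w::(nat \<Rightarrow> real) \<times> (nat \<Rightarrow> bool). if snd w i then fst w i else 0)
      \<in> borel_measurable (Z_space \<Otimes>\<^sub>M bernoulli_seq x)" for i
    by (simp add: if_distrib cong: if_cong)
  show ?thesis unfolding znorm_def by measurable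
qed

lemma nn_integral_eq_nuN:
  assumes Xs: "sets \<Xi> = sets Z_space" and Xp: "prob_space \<Xi>" and Xn: "AE z in \<Xi>. z \<in> nabla_inf"
    and x: "0 \<le> x" "x \<le> 1"
  shows "(\<integral>\<^sup>+w. ennreal (pgf Q ((\<Sum>i. if snd w i then fst w i else 0) + x * (1 - znorm (fst w))) ^ n)
      \<partial>(\<Xi> \<Otimes>\<^sub>M bernoulli_seq x)) = ennreal (nuN Q \<Xi> x n)"
    and nuN_nonneg: "0 \<le> nuN Q \<Xi> x n"
proof -
  let ?f = "\<lambda>w::(nat \<Rightarrow> real) \<times> (nat \<Rightarrow> bool). pgf Q ((\<Sum>i. if snd w i then fst w i else 0) + x * (1 - znorm (fst w))) ^ n"
  interpret X: prob_space \<Xi> by fact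
  interpret B: prob_space "bernoulli_seq x" by (intro prob_space_PiM measure_pmf.prob_space_axioms)
  interpret XB: pair_prob_space \<Xi> "bernoulli_seq x" ..
  have sets_eq: "sets (\<Xi> \<Otimes>\<^sub>M bernoulli_seq x) = sets (Z_space \<Otimes>\<^sub>M bernoulli_seq x)"
    by (rule sets_pair_measure_cong[OF Xs refl])
  have fm: "?f \<in> borel_measurable (\<Xi> \<Otimes>\<^sub>M bernoulli_seq x)"
    using borel_measurable_nuN_integrand measurable_cong_sets[OF sets_eq refl] by blast
  have "Measurable.pred (Z_space \<Otimes>\<^sub>M bernoulli_seq x) (\<lambda>w. fst w \<in> nabla_inf)"
    by measurable
  then have "Measurable.pred (\<Xi> \<Otimes>\<^sub>M bernoulli_seq x) (\<lambda>w. fst w \<in> nabla_inf)"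
    using measurable_cong_sets[OF sets_eq refl] by blast
  then have "AE w in \<Xi> \<Otimes>\<^sub>M bernoulli_seq x. fst w \<in> nabla_inf"
    using Xn by (intro XB.AE_pair_measure) (auto simp: pred_def)
  then have AEb: "AE w in \<Xi> \<Otimes>\<^sub>M bernoulli_seq x. 0 \<le> ?f w \<and> ?f w \<le> 1"
    by eventually_elim (use pgf_bounds[OF Y_value_bounds[OF _ x]] in \<open>simp add: power_le_one\<close>)
  have int: "integrable (\<Xi> \<Otimes>\<^sub>M bernoulli_seq x) ?f"
    by (rule XB.P.integrable_const_bound[where B=1]) (use AEb fm in auto)
  have nuN: "integral\<^sup>L (\<Xi> \<Otimes>\<^sub>M bernoulli_seq x) ?f = nuN Q \<Xi> x n"
    unfolding nuN_def by (intro Bochner_Integration.integral_cong) (auto simp: split_beta)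
  show "(\<integral>\<^sup>+w. ennreal (?f w) \<partial>(\<Xi> \<Otimes>\<^sub>M bernoulli_seq x)) = ennreal (nuN Q \<Xi> x n)"
    using AEb by (subst nn_integral_eq_integral[OF int]) (auto simp: nuN)
  show "0 \<le> nuN Q \<Xi> x n"
    using AEb by (subst nuN[symmetric], intro integral_nonneg_AE) auto
qed

lemma S_fun_nonneg:
  assumes "sets \<Xi> = sets Z_space" "prob_space \<Xi>" "AE z in \<Xi>. z \<in> nabla_inf"
    and "0 \<le> \<gamma>" "\<gamma> \<le> 1" "0 \<le> x" "x \<le> 1"
  shows "0 \<le> S_fun \<gamma> Q \<Xi> x n"
  using pgf_bounds(1)[of x Q] nuN_nonneg[OF assms(1-3) assms(6-7), of Q n] assms(4-7)
  unfolding S_fun_def by simp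

lemma nn_integral_eta_star_eq_nuN:
  assumes N: "N \<ge> 1" and Xs: "sets \<Xi> = sets Z_space" and Xp: "prob_space \<Xi>"
    and Xn: "AE z in \<Xi>. z \<in> nabla_inf" and x: "x = real (card (T \<inter> {1..N})) / real N"
  shows "(\<integral>\<^sup>+z. \<integral>\<^sup>+y. ennreal (pgf Q (measure (eta_star N True z y) T) ^ n) \<partial>Ystar_law N \<partial>\<Xi>)
    = ennreal (nuN Q \<Xi> x n)"
proof -
  interpret B: prob_space "bernoulli_seq x" by (intro prob_space_PiM measure_pmf.prob_space_axioms)
  have x01: "0 \<le> x" "x \<le> 1"
    using x N card_mono[of "{1..N}" "T \<inter> {1..N}"] by auto
  let ?F = "\<lambda>z b. ennreal (pgf Q ((\<Sum>i. if b i then z i else 0) + x * (1 - znorm z)) ^ n)"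
  have Fm: "(\<lambda>w. ?F (fst w) (snd w)) \<in> borel_measurable (\<Xi> \<Otimes>\<^sub>M bernoulli_seq x)"
    using borel_measurable_nuN_integrand[of Q x n]
      measurable_cong_sets[OF sets_pair_measure_cong[OF Xs refl] refl]
    by (intro measurable_compose[OF _ measurable_ennreal]) blast
  have "(\<integral>\<^sup>+z. \<integral>\<^sup>+y. ennreal (pgf Q (measure (eta_star N True z y) T) ^ n) \<partial>Ystar_law N \<partial>\<Xi>)
      = (\<integral>\<^sup>+z. \<integral>\<^sup>+b. ?F z b \<partial>bernoulli_seq x \<partial>\<Xi>)"
    using Xn
  proof (intro nn_integral_cong_AE, eventually_elim)
    case (elim z)
    have "ennreal (pgf Q (measure (eta_star N True z y) T) ^ n) = ?F z (\<lambda>i. y i \<in> T)" for y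
      using elim by (simp add: measure_eta_star x mult.commute)
    moreover have "?F z \<in> borel_measurable (bernoulli_seq x)"
      using measurable_Pair2[OF Fm, of z] sets_eq_imp_space_eq[OF Xs] by (simp add: space_PiM)
    note nn_integral_Ystar_law_indicators[OF N x this]
    ultimately show ?case by simp
  qed
  also have "\<dots> = (\<integral>\<^sup>+w. ?F (fst w) (snd w) \<partial>(\<Xi> \<Otimes>\<^sub>M bernoulli_seq x))"
    using B.nn_integral_fst[OF Fm] by (simp cong: if_cong)
  also have "\<dots> = ennreal (nuN Q \<Xi> x n)"
    by (rule nn_integral_eq_nuN[OF Xs Xp Xn x01])
  finally show ?thesis .
qed

lemma measure_gen_law_parents_satisfy:
  assumes N: "N \<ge> 1" and Xs: "sets \<Xi> = sets Z_space" and Xp: "prob_space \<Xi>"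
    and Xn: "AE z in \<Xi>. z \<in> nabla_inf" and \<gamma>: "0 \<le> \<gamma>" "\<gamma> \<le> 1" and A: "finite A"
  shows "measure (gen_law N \<gamma> Q \<Xi>) (parents_satisfy A t)
    = S_fun \<gamma> Q \<Xi> (real (card ({j. t j} \<inter> {1..N})) / real N) (card A)"
proof -
  interpret X: prob_space \<Xi> by fact
  define x where "x = real (card ({j. t j} \<inter> {1..N})) / real N"
  have x01: "0 \<le> x" "x \<le> 1"
    using N card_mono[of "{1..N}" "{j. t j} \<inter> {1..N}"] by (auto simp: x_def)
  have uniform: "measure (eta_star N False z y) {j. t j} = x" for z y
    by (simp add: measure_eta_star x_def)
  have GF: "(\<integral>\<^sup>+z. \<integral>\<^sup>+y. ennreal (pgf Q (measure (eta_star N False z y) {j. t j}) ^ card A)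
      \<partial>Ystar_law N \<partial>\<Xi>) = ennreal (pgf Q x ^ card A)"
  proof -
    have "emeasure (Ystar_law N) (space (Ystar_law N)) = 1"
      by (intro prob_space.emeasure_space_1 prob_space_PiM measure_pmf.prob_space_axioms)
    then show ?thesis using X.emeasure_space_1 by (simp add: uniform del: One_nat_def)
  qed
  have "emeasure (gen_law N \<gamma> Q \<Xi>) (parents_satisfy A t)
      = ennreal (nuN Q \<Xi> x (card A)) * ennreal \<gamma> + ennreal (pgf Q x ^ card A) * ennreal (1 - \<gamma>)"
    using \<gamma> GF nn_integral_eta_star_eq_nuN[OF N Xs Xp Xn x_def]
    by (simp add: emeasure_gen_law_parents_satisfy[OF N Xs Xp A])
  also have "\<dots> = ennreal (S_fun \<gamma> Q \<Xi> x (card A))"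
    using pgf_bounds(1)[OF x01, of Q] nuN_nonneg[OF Xs Xp Xn x01] \<gamma> unfolding S_fun_def
    by (simp add: ennreal_mult[symmetric] ennreal_plus[symmetric] mult.commute del: ennreal_plus)
  finally show ?thesis
    using S_fun_nonneg[OF Xs Xp Xn \<gamma> x01] by (simp add: measure_def x_def)
qed

section \<open>Types across generations\<close>

lemma type0_cong:
  assumes "\<And>h. 1 \<le> h \<Longrightarrow> h \<le> k \<Longrightarrow> Gs h = Gs' h"
  shows "type0 Gs init k = type0 Gs' init k"
  using assms by (induction k) (auto simp: fun_eq_iff)

lemma type0_restrict: "{1..m} \<subseteq> I \<Longrightarrow> type0 (restrict Gs I) init m = type0 Gs init m"
  by (rule type0_cong) auto

lemma freq0_restrict: "{1..m} \<subseteq> I \<Longrightarrow> freq0 N (restrict Gs I) init m = freq0 N Gs init m"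
  by (simp add: freq0_def type0_restrict)

lemma all_type0_Suc_iff:
  "(\<forall>i\<in>A. type0 Gs init (Suc m) i) \<longleftrightarrow> Gs (Suc m) \<in> parents_satisfy A (type0 Gs init m)"
  by (simp add: parents_satisfy_def)

lemma pred_type0:
  assumes "k \<le> m"
  shows "Measurable.pred (PiM {1..m} (\<lambda>_. gspace)) (\<lambda>a. type0 a init k j)"
  using assms
proof (induction k arbitrary: j)
  case (Suc k)
  let ?P = "PiM {1..m} (\<lambda>_. gspace)"
  have ih: "Measurable.pred ?P (\<lambda>a. type0 a init k v)" for v using Suc by auto
  have am: "(\<lambda>a. a (Suc k)) \<in> measurable ?P gspace"
    using Suc.prems by (intro measurable_component_singleton) auto
  have [measurable]: "Measurable.pred ?P (\<lambda>a. enat l < gK (a (Suc k)) j)" for l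
    using measurable_compose[OF measurable_compose[OF am measurable_gK[of j]], of "\<lambda>v. enat l < v" "count_space UNIV"]
    by simp
  have [measurable]: "Measurable.pred ?P (\<lambda>a. type0 a init k (gL (a (Suc k)) j l))" for l
    by (rule measurable_compose_countable'[where f="\<lambda>v a. type0 a init k v", OF ih
          measurable_compose[OF am measurable_gL]]) simp
  have eq: "(\<lambda>a. type0 a init (Suc k) j)
      = (\<lambda>a. \<forall>l. enat l < gK (a (Suc k)) j \<longrightarrow> type0 a init k (gL (a (Suc k)) j l))"
    by (simp add: fun_eq_iff)
  show ?case unfolding eq by measurable
qed simp

lemma pred_freq0_eq: "Measurable.pred (PiM {1..m} (\<lambda>_. gspace)) (\<lambda>a. freq0 N a init m = x)"
proof -
  have [measurable]: "Measurable.pred (PiM {1..m} (\<lambda>_. gspace)) (\<lambda>a. type0 a init m i)" for i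
    by (rule pred_type0) simp
  have eq: "(\<lambda>a. freq0 N a init m) = (\<lambda>a. (\<Sum>i\<in>{1..N}. if type0 a init m i then 1 else 0) / real N)"
    unfolding freq0_def by (simp add: sum.If_cases Int_def conj_commute)
  have "(\<lambda>a. freq0 N a init m) \<in> borel_measurable (PiM {1..m} (\<lambda>_. gspace))"
    unfolding eq by measurable
  then show ?thesis by measurable
qed

lemma pred_freq0_parents_satisfy:
  "Measurable.pred (PiM {1..m} (\<lambda>_. gspace) \<Otimes>\<^sub>M PiM {Suc m} (\<lambda>_. gspace))
    (\<lambda>w. freq0 N (fst w) init m = x \<and> snd w (Suc m) \<in> parents_satisfy A (type0 (fst w) init m))"
proof -
  let ?P = "PiM {1..m} (\<lambda>_. gspace) \<Otimes>\<^sub>M PiM {Suc m} (\<lambda>_. gspace)"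
  have now: "(\<lambda>w. snd w (Suc m)) \<in> measurable ?P gspace"
    by (rule measurable_compose[OF measurable_snd measurable_component_singleton]) simp
  have tm: "Measurable.pred ?P (\<lambda>w. type0 (fst w) init m v)" for v
    by (rule measurable_compose[OF measurable_fst pred_type0]) simp
  have [measurable]: "Measurable.pred ?P (\<lambda>w. freq0 N (fst w) init m = x)"
    by (rule measurable_compose[OF measurable_fst pred_freq0_eq])
  have [measurable]: "Measurable.pred ?P (\<lambda>w. enat l < gK (snd w (Suc m)) i)" for l i
    using measurable_compose[OF measurable_compose[OF now measurable_gK[of i]], of "\<lambda>v. enat l < v" "count_space UNIV"]
    by simp
  have [measurable]: "Measurable.pred ?P (\<lambda>w. type0 (fst w) init m (gL (snd w (Suc m)) i l))" for i l
    by (rule measurable_compose_countable'[where f="\<lambda>v w. type0 (fst w) init m v", OF tm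
          measurable_compose[OF now measurable_gL]]) simp
  have "Measurable.pred ?P (\<lambda>w. freq0 N (fst w) init m = x
      \<and> (\<forall>i\<in>A. \<forall>l. enat l < gK (snd w (Suc m)) i \<longrightarrow> type0 (fst w) init m (gL (snd w (Suc m)) i l)))"
    by measurable
  then show ?thesis by (simp add: parents_satisfy_def)
qed

section \<open>Conditioning on the past generations\<close>

lemma (in prob_space) prob_indep_var_section:
  assumes indep: "indep_var MX X MY Y"
    and C: "C \<in> sets MX" and E: "E \<in> sets (MX \<Otimes>\<^sub>M MY)" and EC: "E \<subseteq> C \<times> space MY"
    and sec: "\<And>a. a \<in> C \<Longrightarrow> prob {\<omega> \<in> space M. (a, Y \<omega>) \<in> E} = s"
  shows "prob {\<omega> \<in> space M. (X \<omega>, Y \<omega>) \<in> E} = s * prob {\<omega> \<in> space M. X \<omega> \<in> C}"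
proof (cases "C = {}")
  case True
  then show ?thesis using EC by simp
next
  case False
  then have s: "0 \<le> s" using sec by force
  have X: "X \<in> measurable M MX" and Y: "Y \<in> measurable M MY"
    using indep by (auto dest: indep_var_rv1 indep_var_rv2)
  interpret Y: prob_space "distr M MY Y" using Y by (rule prob_space_distr)
  have sections: "emeasure (distr M MY Y) (Pair a -` E) = ennreal s * indicator C a" for a
  proof (cases "a \<in> C")
    case True
    have "Pair a -` E \<in> sets MY" using E by (rule sets_Pair1)
    then have "emeasure (distr M MY Y) (Pair a -` E) = emeasure M {\<omega> \<in> space M. (a, Y \<omega>) \<in> E}"
      by (simp add: emeasure_distr[OF Y] vimage_def Int_def conj_commute)
    then show ?thesis using sec[OF True] True by (simp add: emeasure_eq_measure)
  next
    case False
    then have "Pair a -` E = {}" using EC by auto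
    then show ?thesis using False by simp
  qed
  have "emeasure M {\<omega> \<in> space M. (X \<omega>, Y \<omega>) \<in> E} = emeasure (distr M MX X \<Otimes>\<^sub>M distr M MY Y) E"
    using indep E X Y unfolding indep_var_distribution_eq
    by (simp add: emeasure_distr vimage_def Int_def conj_commute)
  also have "\<dots> = (\<integral>\<^sup>+a. ennreal s * indicator C a \<partial>distr M MX X)"
    using E by (simp add: Y.emeasure_pair_measure_alt sections)
  also have "\<dots> = ennreal s * emeasure M {\<omega> \<in> space M. X \<omega> \<in> C}"
    using C X by (simp add: nn_integral_cmult_indicator emeasure_distr vimage_def Int_def conj_commute)
  finally show ?thesis
    using s by (simp add: emeasure_eq_measure ennreal_mult[symmetric])
qed

lemma (in prob_space) prob_parents_satisfy_type0:
  assumes N: "N \<ge> 1" and Xs: "sets \<Xi> = sets Z_space" and Xp: "prob_space \<Xi>"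
    and Xn: "AE z in \<Xi>. z \<in> nabla_inf" and \<gamma>: "0 \<le> \<gamma>" "\<gamma> \<le> 1" and A: "A \<subseteq> {1..N}"
    and V: "V \<in> measurable M gspace" "distr M gspace V = gen_law N \<gamma> Q \<Xi>"
  shows "prob {\<omega> \<in> space M. V \<omega> \<in> parents_satisfy A (type0 Gs init m)}
    = S_fun \<gamma> Q \<Xi> (freq0 N Gs init m) (card A)"
proof -
  have "prob {\<omega> \<in> space M. V \<omega> \<in> parents_satisfy A (type0 Gs init m)}
      = measure (distr M gspace V) (parents_satisfy A (type0 Gs init m))"
    by (simp add: measure_distr[OF V(1) sets_parents_satisfy] vimage_def Int_def conj_commute)
  also have "\<dots> = S_fun \<gamma> Q \<Xi> (real (card ({j. type0 Gs init m j} \<inter> {1..N})) / real N) (card A)"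
    using measure_gen_law_parents_satisfy[OF N Xs Xp Xn \<gamma> finite_subset[OF A]] by (simp add: V(2))
  also have "{j. type0 Gs init m j} \<inter> {1..N} = {i \<in> {1..N}. type0 Gs init m i}" by auto
  finally show ?thesis by (simp add: freq0_def)
qed

lemma (in prob_space) cond_prob_indep_var:
  assumes indep: "indep_var MX X MY Y"
    and P: "Measurable.pred MX P" and PR: "Measurable.pred (MX \<Otimes>\<^sub>M MY) (\<lambda>w. P (fst w) \<and> R (fst w) (snd w))"
    and sec: "\<And>a. a \<in> space MX \<Longrightarrow> P a \<Longrightarrow> prob {\<omega> \<in> space M. R a (Y \<omega>)} = s"
    and pos: "prob {\<omega> \<in> space M. P (X \<omega>)} > 0"
  shows "cond_prob M (\<lambda>\<omega>. R (X \<omega>) (Y \<omega>)) (\<lambda>\<omega>. P (X \<omega>)) = s"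
proof -
  have "X \<in> measurable M MX" "Y \<in> measurable M MY"
    using indep by (auto dest: indep_var_rv1 indep_var_rv2)
  then have X: "\<And>\<omega>. \<omega> \<in> space M \<Longrightarrow> X \<omega> \<in> space MX" and Y: "\<And>\<omega>. \<omega> \<in> space M \<Longrightarrow> Y \<omega> \<in> space MY"
    by (auto intro: measurable_space)
  have "prob {\<omega> \<in> space M. (X \<omega>, Y \<omega>) \<in> {w \<in> space (MX \<Otimes>\<^sub>M MY). P (fst w) \<and> R (fst w) (snd w)}}
      = s * prob {\<omega> \<in> space M. X \<omega> \<in> {a \<in> space MX. P a}}"
  proof (rule prob_indep_var_section[OF indep])
    fix a assume "a \<in> {a \<in> space MX. P a}"
    then have "{\<omega> \<in> space M. (a, Y \<omega>) \<in> {w \<in> space (MX \<Otimes>\<^sub>M MY). P (fst w) \<and> R (fst w) (snd w)}}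
        = {\<omega> \<in> space M. R a (Y \<omega>)}"
      using Y by (auto simp: space_pair_measure)
    then show "prob {\<omega> \<in> space M. (a, Y \<omega>) \<in> {w \<in> space (MX \<Otimes>\<^sub>M MY). P (fst w) \<and> R (fst w) (snd w)}} = s"
      using sec \<open>a \<in> {a \<in> space MX. P a}\<close> by simp
  qed (use P PR in \<open>auto simp: pred_def space_pair_measure\<close>)
  moreover have "{\<omega> \<in> space M. (X \<omega>, Y \<omega>) \<in> {w \<in> space (MX \<Otimes>\<^sub>M MY). P (fst w) \<and> R (fst w) (snd w)}}
      = {\<omega> \<in> space M. R (X \<omega>) (Y \<omega>) \<and> P (X \<omega>)}"
    and "{\<omega> \<in> space M. X \<omega> \<in> {a \<in> space MX. P a}} = {\<omega> \<in> space M. P (X \<omega>)}"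
    using X Y by (auto simp: space_pair_measure)
  ultimately show ?thesis
    using pos by (simp add: cond_prob_def)
qed

theorem proposition2p5:
  fixes M :: "'a measure" and G :: "nat \<Rightarrow> 'a \<Rightarrow> gdata"
    and N :: nat and \<gamma> :: real and Q :: "enat pmf" and \<Xi> :: "(nat \<Rightarrow> real) measure"
    and init :: "nat \<Rightarrow> bool" and g n :: nat and x :: real and A :: "nat set"
  assumes N: "N \<ge> 1"
    and gamma: "0 \<le> \<gamma>" "\<gamma> \<le> 1"
    and Xi_prob: "prob_space \<Xi>"
    and Xi_sets: "sets \<Xi> = sets (\<Pi>\<^sub>M m\<in>UNIV. (borel :: real measure))"
    and Xi_nabla: "AE z in \<Xi>. z \<in> nabla_inf"
    and M: "prob_space M"
    and indep: "prob_space.indep_vars M (\<lambda>_. gspace) G {1..}"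
    and law: "\<And>h. h \<ge> 1 \<Longrightarrow> distr M gspace (G h) = gen_law N \<gamma> Q \<Xi>"
    and g: "g \<ge> 1"
    and A: "A \<subseteq> {1..N}" "card A = n"
    and pos: "\<P>(\<omega> in M. freq0 N (\<lambda>h. G h \<omega>) init (g - 1) = x) > 0"
  shows "\<P>(\<omega> in M. (\<forall>i\<in>A. type0 (\<lambda>h. G h \<omega>) init g i)
                 \<bar> freq0 N (\<lambda>h. G h \<omega>) init (g - 1) = x)
         = S_fun \<gamma> Q \<Xi> x n"
proof -
  interpret M: prob_space M by (rule M)
  define m where "m = g - 1"
  have g_eq: "g = Suc m" using g by (simp add: m_def)
  let ?past = "PiM {1..m} (\<lambda>_. gspace)" and ?now = "PiM {Suc m} (\<lambda>_. gspace)"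
  let ?X = "\<lambda>\<omega>. restrict (\<lambda>h. G h \<omega>) {1..m}" and ?Y = "\<lambda>\<omega>. restrict (\<lambda>h. G h \<omega>) {Suc m}"
  have indep_past: "M.indep_var ?past ?X ?now ?Y"
    by (rule M.indep_var_restrict[OF indep]) auto
  have G_now: "G (Suc m) \<in> measurable M gspace"
    using indep g_eq g unfolding M.indep_vars_def by auto
  have "\<P>(\<omega> in M. ?Y \<omega> (Suc m) \<in> parents_satisfy A (type0 a init m)) = S_fun \<gamma> Q \<Xi> x n"
    if "a \<in> space ?past" "freq0 N a init m = x" for a
    using M.prob_parents_satisfy_type0[OF N Xi_sets Xi_prob Xi_nabla gamma A(1) G_now law[of "Suc m"]] that A(2)
    by simp
  moreover have "\<P>(\<omega> in M. freq0 N (?X \<omega>) init m = x) > 0"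
    using pos unfolding m_def[symmetric] freq0_restrict[OF order_refl] .
  ultimately have "cond_prob M (\<lambda>\<omega>. ?Y \<omega> (Suc m) \<in> parents_satisfy A (type0 (?X \<omega>) init m))
      (\<lambda>\<omega>. freq0 N (?X \<omega>) init m = x) = S_fun \<gamma> Q \<Xi> x n"
    by (intro M.cond_prob_indep_var[OF indep_past pred_freq0_eq pred_freq0_parents_satisfy])
  then show ?thesis
    unfolding m_def[symmetric] g_eq all_type0_Suc_iff type0_restrict[OF order_refl] freq0_restrict[OF order_refl]
    by simp
qed

end
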